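(* Let $X$ be a Banach lattice of (equivalence classes of) real valued functions on a $\sigma$-finite measure space $(\Omega,\Sigma,\mu)$, with $X\subseteq L_1+L_\infty$, and let $T:X\to X$ be a linear operator which is semi band preserving. Let $\Sigma_T=\{A\subseteq\Omega:\ \exists f\in X \text{ with } \operatorname{supp}(Tf)=A\}$ and $S_T=\bigcup_{A\in\Sigma_T}A$. Then for every $f\in X$ with $\operatorname{supp} f\subseteq\Omega\setminus S_T$ we have $Tf=0$.
   Context: For $f,g\in X$, $f\perp g$ means $|f|\wedge|g|=0$ (i.e. the supports are disjoint). A linear operator $T$ on $X$ is semi band preserving if for all $f,g\in X$: $f\perp Tg$ implies $Tf\perp Tg$. $\operatorname{supp} f$ is the minimal set outside of which $f=0$ a.e.; all set relations are modulo null sets. *)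

theory Defs
  imports "HOL-Analysis.Analysis"
begin

text \<open>Elements of X are represented by real-valued measurable functions on the
space of M; all equalities/inequalities between elements of X are understood
almost everywhere (i.e. on equivalence classes).\<close>

definition ae_eq :: "'a measure \<Rightarrow> ('a \<Rightarrow> real) \<Rightarrow> ('a \<Rightarrow> real) \<Rightarrow> bool" where
  "ae_eq M f g \<longleftrightarrow> (AE x in M. f x = g x)"

definition ae_le :: "'a measure \<Rightarrow> ('a \<Rightarrow> real) \<Rightarrow> ('a \<Rightarrow> real) \<Rightarrow> bool" where
  "ae_le M f g \<longleftrightarrow> (AE x in M. f x \<le> g x)"

definition in_L1_plus_Linf :: "'a measure \<Rightarrow> ('a \<Rightarrow> real) \<Rightarrow> bool" where
  "in_L1_plus_Linf M f \<longleftrightarrow> (\<exists>g h. integrable M g \<and> h \<in> borel_measurable M \<and>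
      (\<exists>C. AE x in M. \<bar>h x\<bar> \<le> C) \<and> (AE x in M. f x = g x + h x))"

definition banach_lattice_fun ::
  "'a measure \<Rightarrow> ('a \<Rightarrow> real) set \<Rightarrow> (('a \<Rightarrow> real) \<Rightarrow> real) \<Rightarrow> bool" where
  "banach_lattice_fun M X N \<longleftrightarrow>
     X \<subseteq> borel_measurable M \<and>
     (\<lambda>x. 0) \<in> X \<and>
     (\<forall>f\<in>X. \<forall>g\<in>X. \<forall>a b. (\<lambda>x. a * f x + b * g x) \<in> X) \<and>
     (\<forall>f\<in>X. (\<lambda>x. \<bar>f x\<bar>) \<in> X) \<and>
     (\<forall>f\<in>X. \<forall>g\<in>borel_measurable M. ae_eq M f g \<longrightarrow> g \<in> X) \<and>
     (\<forall>f\<in>X. \<forall>g\<in>X. ae_eq M f g \<longrightarrow> N f = N g) \<and>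
     (\<forall>f\<in>X. N f \<ge> 0 \<and> (N f = 0 \<longleftrightarrow> ae_eq M f (\<lambda>x. 0))) \<and>
     (\<forall>f\<in>X. \<forall>a. N (\<lambda>x. a * f x) = \<bar>a\<bar> * N f) \<and>
     (\<forall>f\<in>X. \<forall>g\<in>X. N (\<lambda>x. f x + g x) \<le> N f + N g) \<and>
     (\<forall>f\<in>X. \<forall>g\<in>X. ae_le M (\<lambda>x. \<bar>f x\<bar>) (\<lambda>x. \<bar>g x\<bar>) \<longrightarrow> N f \<le> N g) \<and>
     (\<forall>s. (\<forall>n. s n \<in> X) \<longrightarrow>
        (\<forall>e>0. \<exists>K. \<forall>m\<ge>K. \<forall>n\<ge>K. N (\<lambda>x. s m x - s n x) < e) \<longrightarrow>
        (\<exists>f\<in>X. (\<lambda>n. N (\<lambda>x. s n x - f x)) \<longlonglongrightarrow> 0))"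

definition linear_op_on ::
  "'a measure \<Rightarrow> ('a \<Rightarrow> real) set \<Rightarrow> (('a \<Rightarrow> real) \<Rightarrow> ('a \<Rightarrow> real)) \<Rightarrow> bool" where
  "linear_op_on M X T \<longleftrightarrow>
     (\<forall>f\<in>X. T f \<in> X) \<and>
     (\<forall>f\<in>X. \<forall>g\<in>X. ae_eq M f g \<longrightarrow> ae_eq M (T f) (T g)) \<and>
     (\<forall>f\<in>X. \<forall>g\<in>X. \<forall>a b. ae_eq M (T (\<lambda>x. a * f x + b * g x)) (\<lambda>x. a * T f x + b * T g x))"

definition disj_fun :: "'a measure \<Rightarrow> ('a \<Rightarrow> real) \<Rightarrow> ('a \<Rightarrow> real) \<Rightarrow> bool" where
  "disj_fun M f g \<longleftrightarrow> (AE x in M. min \<bar>f x\<bar> \<bar>g x\<bar> = 0)"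

definition semi_band_preserving ::
  "'a measure \<Rightarrow> ('a \<Rightarrow> real) set \<Rightarrow> (('a \<Rightarrow> real) \<Rightarrow> ('a \<Rightarrow> real)) \<Rightarrow> bool" where
  "semi_band_preserving M X T \<longleftrightarrow>
     (\<forall>f\<in>X. \<forall>g\<in>X. disj_fun M f (T g) \<longrightarrow> disj_fun M (T f) (T g))"

definition ae_subset :: "'a measure \<Rightarrow> 'a set \<Rightarrow> 'a set \<Rightarrow> bool" where
  "ae_subset M A B \<longleftrightarrow> (AE x in M. x \<in> A \<longrightarrow> x \<in> B)"

text \<open>A is (a representative of) the support of f: the minimal measurable set,
modulo null sets, outside of which f = 0 a.e.\<close>
definition is_supp :: "'a measure \<Rightarrow> ('a \<Rightarrow> real) \<Rightarrow> 'a set \<Rightarrow> bool" where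
  "is_supp M f A \<longleftrightarrow> A \<in> sets M \<and> (AE x in M. x \<notin> A \<longrightarrow> f x = 0) \<and>
     (\<forall>B\<in>sets M. (AE x in M. x \<notin> B \<longrightarrow> f x = 0) \<longrightarrow> ae_subset M A B)"

text \<open>S is (a representative of) the union, modulo null sets, of the family F:
the least measurable set (mod null sets) containing every member of F mod null sets.\<close>
definition is_ess_union :: "'a measure \<Rightarrow> 'a set set \<Rightarrow> 'a set \<Rightarrow> bool" where
  "is_ess_union M F S \<longleftrightarrow> S \<in> sets M \<and> (\<forall>A\<in>F. ae_subset M A S) \<and>
     (\<forall>B\<in>sets M. (\<forall>A\<in>F. ae_subset M A B) \<longrightarrow> ae_subset M S B)"

definition Sigma_T ::
  "'a measure \<Rightarrow> ('a \<Rightarrow> real) set \<Rightarrow> (('a \<Rightarrow> real) \<Rightarrow> ('a \<Rightarrow> real)) \<Rightarrow> 'a set set" where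
  "Sigma_T M X T = {A. \<exists>f\<in>X. is_supp M (T f) A}"

end

theory Submission
  imports Defs
begin

text \<open>The support of \<open>Tf\<close> belongs to \<open>\<Sigma>\<^sub>T\<close> and hence lies in \<open>S\<^sub>T\<close>, while \<open>f\<close> is supported
off \<open>S\<^sub>T\<close>; so \<open>f \<perp> Tf\<close>, and semi band preservation gives \<open>Tf \<perp> Tf\<close>, i.e. \<open>Tf = 0\<close>.\<close>

lemma is_supp_nonzero_set:
  assumes "g \<in> borel_measurable M"
  shows "is_supp M g {x \<in> space M. g x \<noteq> 0}"
  unfolding is_supp_def ae_subset_def
proof (intro conjI ballI impI)
  show "{x \<in> space M. g x \<noteq> 0} \<in> sets M"
    using assms by measurable
  show "AE x in M. x \<notin> {x \<in> space M. g x \<noteq> 0} \<longrightarrow> g x = 0"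
    by (rule AE_I2) auto
  fix B assume "AE x in M. x \<notin> B \<longrightarrow> g x = 0"
  then show "AE x in M. x \<in> {x \<in> space M. g x \<noteq> 0} \<longrightarrow> x \<in> B"
    by eventually_elim auto
qed

lemma nonzero_set_in_Sigma_T:
  assumes "banach_lattice_fun M X N" and "linear_op_on M X T" and "f \<in> X"
  shows "{x \<in> space M. T f x \<noteq> 0} \<in> Sigma_T M X T"
proof -
  have "T f \<in> X"
    using assms(2,3) unfolding linear_op_on_def by blast
  then have "T f \<in> borel_measurable M"
    using assms(1) unfolding banach_lattice_fun_def by blast
  then show ?thesis
    using is_supp_nonzero_set \<open>f \<in> X\<close> unfolding Sigma_T_def by blast
qed

lemma disj_fun_if_disjoint_supports:
  assumes "is_supp M f A" and "ae_subset M A (space M - B)"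
    and "AE x in M. x \<notin> B \<longrightarrow> g x = 0"
  shows "disj_fun M f g"
proof -
  have "AE x in M. x \<notin> A \<longrightarrow> f x = 0"
    using assms(1) unfolding is_supp_def by blast
  with assms(2,3) have "AE x in M. f x = 0 \<or> g x = 0"
    unfolding ae_subset_def by eventually_elim blast
  then show ?thesis
    unfolding disj_fun_def by eventually_elim auto
qed

lemma disj_fun_self_iff: "disj_fun M g g \<longleftrightarrow> (AE x in M. g x = 0)"
  unfolding disj_fun_def by simp

theorem proposition4p2:
  fixes M :: "'a measure" and X :: "('a \<Rightarrow> real) set"
    and N :: "('a \<Rightarrow> real) \<Rightarrow> real" and T :: "('a \<Rightarrow> real) \<Rightarrow> ('a \<Rightarrow> real)"
  assumes "sigma_finite_measure M"
    and "banach_lattice_fun M X N"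
    and "\<forall>f\<in>X. in_L1_plus_Linf M f"
    and "linear_op_on M X T"
    and "semi_band_preserving M X T"
    and "is_ess_union M (Sigma_T M X T) S"
    and "f \<in> X"
    and "is_supp M f A"
    and "ae_subset M A (space M - S)"
  shows "AE x in M. T f x = 0"
proof -
  have "ae_subset M {x \<in> space M. T f x \<noteq> 0} S"
    using nonzero_set_in_Sigma_T[OF assms(2,4,7)] assms(6)
    unfolding is_ess_union_def by blast
  then have "AE x in M. x \<notin> S \<longrightarrow> T f x = 0"
    using AE_space unfolding ae_subset_def by eventually_elim auto
  with assms(8,9) have "disj_fun M f (T f)"
    by (rule disj_fun_if_disjoint_supports)
  then have "disj_fun M (T f) (T f)"
    using assms(5,7) unfolding semi_band_preserving_def by blast
  then show ?thesis
    by (simp add: disj_fun_self_iff)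
qed

end
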